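(* Let $\rho=(a^b)$ be a partition of $n=ab$ with $a,b\ge 3$, and let $\alpha(\rho)=(a+1,a^{\,b-2},a-1)$ and $\beta(\rho)=(a^{\,b-1},a-1,1)$. Then each of $\alpha(\rho)$ and $\beta(\rho)$ belongs to a clique of size $4$ in $G_n$. In particular, $\alpha(\rho),\beta(\rho)\in\bigcup_{r\ge 3}L_r(n)$, i.e. both have local simplex dimension at least $3$.
   Context: The partition graph $G_n$ has as vertices the integer partitions of $n$; two partitions are adjacent if one is obtained from the other by a single elementary unit transfer followed by reordering: decrease one part by $1$ and either increase a different part by $1$ or create a new part equal to $1$, then delete a part that became $0$ and sort in nonincreasing order (the result being different from the original). Exponent notation $a^k$ denotes $k$ parts equal to $a$. The local simplex dimension of a vertex $v$ is $m-1$ where $m$ is the largest size of a clique of $G_n$ containing $v$; $L_r(n)$ is the set of vertices of local simplex dimension $r$. *)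

theory Defs
  imports Main
begin

definition is_partition :: "nat \<Rightarrow> nat list \<Rightarrow> bool" where
  "is_partition n p \<longleftrightarrow> sorted_wrt (\<ge>) p \<and> 0 \<notin> set p \<and> sum_list p = n"

definition partitions :: "nat \<Rightarrow> nat list set" where
  "partitions n = {p. is_partition n p}"

definition normalize :: "nat list \<Rightarrow> nat list" where
  "normalize xs = rev (sort (filter (\<lambda>x. x \<noteq> 0) xs))"

definition unit_transfer :: "nat list \<Rightarrow> nat list \<Rightarrow> bool" where
  "unit_transfer p q \<longleftrightarrow>
     (\<exists>i < length p.
        (\<exists>j < length p. j \<noteq> i \<and> q = normalize (p[i := p ! i - 1, j := p ! j + 1]))
      \<or> q = normalize (p[i := p ! i - 1] @ [1]))"

definition pg_adj :: "nat \<Rightarrow> nat list \<Rightarrow> nat list \<Rightarrow> bool" where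
  "pg_adj n p q \<longleftrightarrow> p \<in> partitions n \<and> q \<in> partitions n \<and> p \<noteq> q \<and>
     (unit_transfer p q \<or> unit_transfer q p)"

definition pg_clique :: "nat \<Rightarrow> nat list set \<Rightarrow> bool" where
  "pg_clique n K \<longleftrightarrow> K \<subseteq> partitions n \<and> (\<forall>p\<in>K. \<forall>q\<in>K. p \<noteq> q \<longrightarrow> pg_adj n p q)"

definition local_simplex_dim :: "nat \<Rightarrow> nat list \<Rightarrow> nat" where
  "local_simplex_dim n v = Max {card K | K. pg_clique n K \<and> v \<in> K} - 1"

definition L :: "nat \<Rightarrow> nat \<Rightarrow> nat list set" where
  "L r n = {v \<in> partitions n. local_simplex_dim n v = r}"

definition alpha_part :: "nat \<Rightarrow> nat \<Rightarrow> nat list" where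
  "alpha_part a b = (a + 1) # replicate (b - 2) a @ [a - 1]"

definition beta_part :: "nat \<Rightarrow> nat \<Rightarrow> nat list" where
  "beta_part a b = replicate (b - 1) a @ [a - 1, 1]"

end

theory Submission
  imports Defs "HOL-Library.Multiset"
begin

text \<open>Encode a partition by the multiset of its parts, where zero parts are allowed and ignored;
  creating a new part 1 is then just moving a unit onto a zero part. Moving a unit away from a
  fixed part \<open>x\<close> onto one of several targets \<open>y\<^sub>i\<close> gives partitions that are pairwise adjacent,
  since the results for \<open>y\<^sub>i\<close> and \<open>y\<^sub>j\<close> differ by moving a unit from \<open>y\<^sub>i + 1\<close> to \<open>y\<^sub>j\<close>.
  So a partition and three such moves form a 4-clique. For \<open>\<alpha>(\<rho>)\<close> move a unit from the part
  \<open>a - 1\<close> onto \<open>a + 1\<close>, onto an \<open>a\<close>, or into a new part; for \<open>\<beta>(\<rho>)\<close> move a unit from an \<open>a\<close>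
  onto another \<open>a\<close>, onto the part 1, or into a new part.\<close>

definition partition_of :: "nat multiset \<Rightarrow> nat list" where
  "partition_of M = rev (sorted_list_of_multiset {# x \<in># M. x \<noteq> 0 #})"

lemma mset_partition_of [simp]: "mset (partition_of M) = {# x \<in># M. x \<noteq> 0 #}"
  by (simp add: partition_of_def)

lemma partition_of_add_zero [simp]: "partition_of (add_mset 0 M) = partition_of M"
  by (simp add: partition_of_def)

lemma partition_of_eq_iff:
  "partition_of M = partition_of M' \<longleftrightarrow> {# x \<in># M. x \<noteq> 0 #} = {# x \<in># M'. x \<noteq> 0 #}"
  by (metis mset_partition_of partition_of_def)

lemma partition_of_in_partitions: "partition_of M \<in> partitions (sum_mset M)"
proof -
  have "sum_list (partition_of M) = sum_mset {# x \<in># M. x \<noteq> 0 #}"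
    by (metis mset_partition_of sum_mset_sum_list)
  also have "\<dots> = sum_mset M"
    by (induction M) auto
  finally have "sum_list (partition_of M) = sum_mset M" .
  then show ?thesis
    by (simp add: partitions_def is_partition_def partition_of_def sorted_wrt_rev)
qed

lemma partition_of_mset:
  assumes "sorted_wrt (\<ge>) p" "0 \<notin> set p"
  shows "partition_of (mset p) = p"
proof -
  have "{# x \<in># mset p. x \<noteq> 0 #} = mset p"
    using assms(2) by (induction p) auto
  moreover have "sort p = rev p"
    using assms(1) by (intro properties_for_sort) (simp_all add: sorted_wrt_rev)
  ultimately show ?thesis
    by (simp add: partition_of_def)
qed

lemma normalize_eq_partition_of: "normalize xs = partition_of (mset xs)"
  unfolding normalize_def partition_of_def by (metis mset_filter sorted_list_of_multiset_mset)

lemma obtain_distinct_indices: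
  assumes "{#x, y#} \<subseteq># mset xs"
  obtains i j where "i < length xs" "j < length xs" "i \<noteq> j" "xs ! i = x" "xs ! j = y"
proof (cases "x = y")
  case False
  have "x \<in> set xs" "y \<in> set xs"
    using assms by (auto dest: mset_subset_eqD)
  then show ?thesis
    using False that by (metis in_set_conv_nth)
next
  case True
  have "2 \<le> count (mset xs) x"
    using assms True by (metis count_add_mset count_single mset_subset_eq_count numeral_2_eq_2)
  then have "2 \<le> card {k. k < length xs \<and> xs ! k = x}"
    by (simp add: count_mset count_list_eq_length_filter length_filter_conv_card eq_commute)
  then obtain i j where "i \<in> {k. k < length xs \<and> xs ! k = x}" "j \<in> {k. k < length xs \<and> xs ! k = x}" "i \<noteq> j"
    by (auto simp: numeral_2_eq_2 card_le_Suc_iff)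
  then show ?thesis
    using True that by blast
qed

lemma unit_transfer_partition_of:
  assumes "x \<noteq> 0"
  shows "unit_transfer (partition_of (N + {#x, y#})) (partition_of (N + {#x - 1, y + 1#}))"
proof -
  let ?p = "partition_of (N + {#x, y#})"
  let ?N = "{# u \<in># N. u \<noteq> 0 #}"
  show ?thesis
  proof (cases "y = 0")
    case True
    then have p: "mset ?p = add_mset x ?N"
      using assms by simp
    then obtain i where i: "i < length ?p" "?p ! i = x"
      by (metis in_set_conv_nth set_mset_mset union_single_eq_member)
    have "mset (?p[i := ?p ! i - 1] @ [1]) = ?N + {#x - 1, y + 1#}"
      using i p True by (simp add: mset_update)
    then have "normalize (?p[i := ?p ! i - 1] @ [1]) = partition_of (N + {#x - 1, y + 1#})"
      by (simp add: normalize_eq_partition_of partition_of_eq_iff filter_filter_mset)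
    then show ?thesis
      unfolding unit_transfer_def using i by metis
  next
    case False
    then have p: "mset ?p = ?N + {#x, y#}"
      using assms by simp
    then obtain i j where ij: "i < length ?p" "j < length ?p" "i \<noteq> j" "?p ! i = x" "?p ! j = y"
      using obtain_distinct_indices[of x y ?p] by auto
    have "mset (?p[i := ?p ! i - 1, j := ?p ! j + 1]) = ?N + {#x - 1, y + 1#}"
      using ij p by (simp add: mset_update)
    then have "normalize (?p[i := ?p ! i - 1, j := ?p ! j + 1]) = partition_of (N + {#x - 1, y + 1#})"
      by (simp add: normalize_eq_partition_of partition_of_eq_iff filter_filter_mset)
    then show ?thesis
      unfolding unit_transfer_def using ij by metis
  qed
qed

lemma partition_of_unit_move_neq:
  assumes "x \<noteq> 0" "y \<noteq> x - 1"
  shows "partition_of (N + {#x, y#}) \<noteq> partition_of (N + {#x - 1, y + 1#})"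
proof -
  have "x \<in># {# u \<in># {#x, y#}. u \<noteq> 0 #}" "x \<notin># {# u \<in># {#x - 1, y + 1#}. u \<noteq> 0 #}"
    using assms by auto
  then show ?thesis
    unfolding partition_of_eq_iff filter_union_mset add_left_cancel by metis
qed

lemma pg_clique_unit_moves:
  fixes N :: "nat multiset"
  assumes "x \<noteq> 0" "distinct [y1, y2, y3]" "x - 1 \<notin> {y1, y2, y3}"
  defines P0_def: "P0 \<equiv> partition_of (N + {#x, y1, y2, y3#})"
    and P1_def: "P1 \<equiv> partition_of (N + {#x - 1, y1 + 1, y2, y3#})"
    and P2_def: "P2 \<equiv> partition_of (N + {#x - 1, y1, y2 + 1, y3#})"
    and P3_def: "P3 \<equiv> partition_of (N + {#x - 1, y1, y2, y3 + 1#})"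
  shows "pg_clique (sum_mset N + x + y1 + y2 + y3) {P0, P1, P2, P3} \<and> card {P0, P1, P2, P3} = 4"
proof -
  define n where "n = sum_mset N + x + y1 + y2 + y3"
  have "P0 \<in> partitions n" "P1 \<in> partitions n" "P2 \<in> partitions n" "P3 \<in> partitions n"
    using partition_of_in_partitions[of "N + {#x, y1, y2, y3#}"]
      partition_of_in_partitions[of "N + {#x - 1, y1 + 1, y2, y3#}"]
      partition_of_in_partitions[of "N + {#x - 1, y1, y2 + 1, y3#}"]
      partition_of_in_partitions[of "N + {#x - 1, y1, y2, y3 + 1#}"]
      assms(1)
    by (simp_all add: P0_def P1_def P2_def P3_def n_def ac_simps)
  moreover have "unit_transfer P0 P1" "unit_transfer P0 P2" "unit_transfer P0 P3"
    "unit_transfer P1 P2" "unit_transfer P1 P3" "unit_transfer P2 P3"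
    using unit_transfer_partition_of[of x "N + {#y2, y3#}" y1]
      unit_transfer_partition_of[of x "N + {#y1, y3#}" y2]
      unit_transfer_partition_of[of x "N + {#y1, y2#}" y3]
      unit_transfer_partition_of[of "y1 + 1" "N + {#x - 1, y3#}" y2]
      unit_transfer_partition_of[of "y1 + 1" "N + {#x - 1, y2#}" y3]
      unit_transfer_partition_of[of "y2 + 1" "N + {#x - 1, y1#}" y3]
      assms(1)
    by (simp_all add: P0_def P1_def P2_def P3_def add_mset_commute)
  moreover have "P0 \<noteq> P1" "P0 \<noteq> P2" "P0 \<noteq> P3" "P1 \<noteq> P2" "P1 \<noteq> P3" "P2 \<noteq> P3"
    using partition_of_unit_move_neq[of x y1 "N + {#y2, y3#}"]
      partition_of_unit_move_neq[of x y2 "N + {#y1, y3#}"]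
      partition_of_unit_move_neq[of x y3 "N + {#y1, y2#}"]
      partition_of_unit_move_neq[of "y1 + 1" y2 "N + {#x - 1, y3#}"]
      partition_of_unit_move_neq[of "y1 + 1" y3 "N + {#x - 1, y2#}"]
      partition_of_unit_move_neq[of "y2 + 1" y3 "N + {#x - 1, y1#}"]
      assms(1-3)
    by (simp_all add: P0_def P1_def P2_def P3_def add_mset_commute)
  ultimately show ?thesis
    unfolding n_def [symmetric] by (auto simp: pg_clique_def pg_adj_def)
qed

lemma length_le_sum_list: "0 \<notin> set xs \<Longrightarrow> length xs \<le> sum_list (xs :: nat list)"
  by (induction xs) (auto simp: Suc_le_eq)

lemma finite_partitions: "finite (partitions n)"
proof (rule finite_subset)
  show "partitions n \<subseteq> {xs. set xs \<subseteq> {0..n} \<and> length xs \<le> n}"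
    unfolding partitions_def is_partition_def
    using length_le_sum_list member_le_sum_list by fastforce
  show "finite {xs. set xs \<subseteq> {0..n} \<and> length xs \<le> n}"
    by (rule finite_lists_length_le) simp
qed

lemma card_clique_le_local_simplex_dim:
  assumes "pg_clique n K" "v \<in> K"
  shows "card K - 1 \<le> local_simplex_dim n v"
proof -
  let ?S = "{card K | K. pg_clique n K \<and> v \<in> K}"
  have "?S \<subseteq> card ` Pow (partitions n)"
    unfolding pg_clique_def by auto
  then have "finite ?S"
    using finite_partitions by (meson finite_imageI finite_Pow_iff finite_subset)
  moreover have "card K \<in> ?S"
    using assms by auto
  ultimately show ?thesis
    unfolding local_simplex_dim_def by (simp add: diff_le_mono)
qed

lemma mem_UN_L_if_clique:
  assumes "pg_clique n K" "v \<in> K" "k < card K"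
  shows "v \<in> (\<Union>r\<in>{k..}. L r n)"
proof -
  have "v \<in> partitions n"
    using assms(1,2) by (auto simp: pg_clique_def)
  moreover have "k \<le> local_simplex_dim n v"
    using card_clique_le_local_simplex_dim[OF assms(1,2)] assms(3) by linarith
  ultimately show ?thesis
    by (auto simp: L_def)
qed

lemma sorted_wrt_replicate: "R x x \<Longrightarrow> sorted_wrt R (replicate k x)"
  by (induction k) auto

lemma alpha_part_eq_partition_of:
  assumes "a \<ge> 2"
  shows "alpha_part a (c + 3) = partition_of (replicate_mset c a + {#a - 1, a + 1, a, 0#})"
proof -
  have "alpha_part a (c + 3) = partition_of (mset (alpha_part a (c + 3)))"
    using assms by (intro partition_of_mset [symmetric])
      (auto simp: alpha_part_def sorted_wrt_append sorted_wrt_replicate)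
  then show ?thesis
    by (simp add: alpha_part_def add_mset_commute numeral_eq_Suc)
qed

lemma beta_part_eq_partition_of:
  assumes "a \<ge> 2"
  shows "beta_part a (c + 3) = partition_of (add_mset (a - 1) (replicate_mset c a) + {#a, a, 1, 0#})"
proof -
  have "beta_part a (c + 3) = partition_of (mset (beta_part a (c + 3)))"
    using assms by (intro partition_of_mset [symmetric])
      (auto simp: beta_part_def sorted_wrt_append sorted_wrt_replicate)
  then show ?thesis
    by (simp add: beta_part_def add_mset_commute numeral_eq_Suc)
qed

theorem proposition4p7:
  fixes a b n :: nat
  assumes "a \<ge> 3" and "b \<ge> 3" and "n = a * b"
  shows "(\<exists>K. pg_clique n K \<and> card K = 4 \<and> alpha_part a b \<in> K)
       \<and> (\<exists>K. pg_clique n K \<and> card K = 4 \<and> beta_part a b \<in> K)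
       \<and> alpha_part a b \<in> (\<Union>r\<in>{3..}. L r n)
       \<and> beta_part a b \<in> (\<Union>r\<in>{3..}. L r n)"
proof -
  obtain c where b: "b = c + 3"
    using assms(2) le_Suc_ex by (metis add.commute)
  have "\<exists>K. pg_clique n K \<and> card K = 4 \<and> alpha_part a b \<in> K"
  proof -
    have "a - 1 \<noteq> 0" "distinct [a + 1, a, 0]" "a - 1 - 1 \<notin> {a + 1, a, 0}"
      using assms(1) by auto
    moreover have "sum_mset (replicate_mset c a) + (a - 1) + (a + 1) + a + 0 = n"
      using assms by (simp add: b algebra_simps)
    ultimately show ?thesis
      using pg_clique_unit_moves[of "a - 1" "a + 1" a 0 "replicate_mset c a"]
        alpha_part_eq_partition_of[of a c] assms(1) unfolding b by auto
  qed
  moreover have "\<exists>K. pg_clique n K \<and> card K = 4 \<and> beta_part a b \<in> K"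
  proof -
    have "a \<noteq> 0" "distinct [a, 1, 0]" "a - 1 \<notin> {a, 1, 0}"
      using assms(1) by auto
    moreover have "sum_mset (add_mset (a - 1) (replicate_mset c a)) + a + a + 1 + 0 = n"
      using assms by (simp add: b algebra_simps)
    ultimately show ?thesis
      using pg_clique_unit_moves[of a a 1 0 "add_mset (a - 1) (replicate_mset c a)"]
        beta_part_eq_partition_of[of a c] assms(1) unfolding b by auto
  qed
  ultimately show ?thesis
    using mem_UN_L_if_clique[of n _ _ 3] by auto
qed

end
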